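(* Let $\mathcal{C}\subseteq\{\pm1\}^n$ be an $\epsilon$-balanced linear code, let $L\subseteq[n]$ with $|L|=\ell>0$, let $a\in\{\pm1\}^L$, and let $\mathcal{R}=\{c\in\mathcal{C}: c_j=a_j\text{ for all }j\in L\}$. If $\ell/n>2\epsilon$, then $$|\mathcal{R}|\le\frac{1-2\epsilon}{\ell/n-2\epsilon}.$$
   Context: The binary field $\mathbb{F}_2$ is represented by $\{\pm1\}$; a linear code is an $\mathbb{F}_2$-subspace of $\{\pm1\}^n$. A code is $\epsilon$-balanced if $(1/2-\epsilon)n\le d_H(c,c')\le(1/2+\epsilon)n$ for all distinct codewords $c,c'$, where $d_H$ is Hamming distance. $\mathcal{R}$ is the set of codewords of $\mathcal{C}$ whose entries at the positions in $L$ are fixed to the prescribed values $a$. *)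

theory Defs
  imports Complex_Main
begin

text \<open>Words of length n over F_2 represented multiplicatively by {1,-1}, as integer lists.\<close>
definition pm_words :: "nat \<Rightarrow> int list set" where
  "pm_words n = {w. length w = n \<and> set w \<subseteq> {-1, 1}}"

text \<open>Addition in F_2^n corresponds to coordinatewise multiplication.\<close>
definition pm_add :: "int list \<Rightarrow> int list \<Rightarrow> int list" where
  "pm_add u v = map2 (*) u v"

text \<open>A linear code: an F_2-subspace of {+-1}^n (contains zero = all-ones word, closed under addition).\<close>
definition linear_code :: "nat \<Rightarrow> int list set \<Rightarrow> bool" where
  "linear_code n C \<longleftrightarrow> C \<subseteq> pm_words n \<and> replicate n 1 \<in> C \<and>
     (\<forall>u\<in>C. \<forall>v\<in>C. pm_add u v \<in> C)"

definition hamming_dist :: "int list \<Rightarrow> int list \<Rightarrow> nat" where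
  "hamming_dist u v = card {i. i < length u \<and> u ! i \<noteq> v ! i}"

definition eps_balanced :: "nat \<Rightarrow> real \<Rightarrow> int list set \<Rightarrow> bool" where
  "eps_balanced n \<epsilon> C \<longleftrightarrow> (\<forall>c\<in>C. \<forall>c'\<in>C. c \<noteq> c' \<longrightarrow>
     (1/2 - \<epsilon>) * real n \<le> real (hamming_dist c c') \<and>
     real (hamming_dist c c') \<le> (1/2 + \<epsilon>) * real n)"

definition restricted_code :: "int list set \<Rightarrow> nat set \<Rightarrow> (nat \<Rightarrow> int) \<Rightarrow> int list set" where
  "restricted_code C L a = {c \<in> C. \<forall>j\<in>L. c ! j = a j}"

end

theory Submission
  imports Defs
begin

text \<open>Second-moment (Plotkin-type) bound. Let \<open>R\<close> have \<open>m\<close> words and let \<open>S\<^sub>j\<close> be the sum of the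
  \<open>j\<close>-th entries of the words of \<open>R\<close>. Then \<open>\<Sum>\<^sub>j S\<^sub>j\<^sup>2 = \<Sum>\<^sub>c\<^sub>,\<^sub>d \<langle>c,d\<rangle>\<close>. On the \<open>\<ell>\<close> fixed coordinates
  \<open>S\<^sub>j = \<plusminus>m\<close>, so the left side is at least \<open>\<ell> m\<^sup>2\<close>; since \<open>\<langle>c,d\<rangle> = n - 2 d\<^sub>H(c,d) \<le> 2\<epsilon>n\<close> for
  \<open>c \<noteq> d\<close>, the right side is at most \<open>m n + m (m - 1) 2\<epsilon>n\<close>. Solving for \<open>m\<close> gives the bound.\<close>

definition pm_inner :: "nat \<Rightarrow> int list \<Rightarrow> int list \<Rightarrow> real" where
  "pm_inner n c d = (\<Sum>j<n. real_of_int (c ! j) * real_of_int (d ! j))"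

lemma pm_words_nth: "c \<in> pm_words n \<Longrightarrow> j < n \<Longrightarrow> c ! j = -1 \<or> c ! j = 1"
  unfolding pm_words_def using nth_mem by fastforce

lemma finite_pm_words: "finite (pm_words n)"
proof -
  have "pm_words n = {w. set w \<subseteq> {-1, 1} \<and> length w = n}"
    unfolding pm_words_def by auto
  then show ?thesis
    using finite_lists_length_eq[of "{-1, 1 :: int}" n] by simp
qed

lemma pm_inner_hamming_dist:
  assumes "c \<in> pm_words n" "d \<in> pm_words n"
  shows "pm_inner n c d = real n - 2 * real (hamming_dist c d)"
proof -
  define D where "D = {j. j < n \<and> c ! j \<noteq> d ! j}"
  have "length c = n" using assms(1) unfolding pm_words_def by simp
  then have dist_eq: "hamming_dist c d = card D"
    unfolding hamming_dist_def D_def by simp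
  have D_sub: "D \<subseteq> {..<n}" unfolding D_def by auto
  have entry_prod: "real_of_int (c ! j) * real_of_int (d ! j) = (if j \<in> D then -1 else 1)"
    if "j < n" for j
    using pm_words_nth[OF assms(1) that] pm_words_nth[OF assms(2) that] that
    unfolding D_def by auto
  have "pm_inner n c d = (\<Sum>j<n. if j \<in> D then -1 else 1)"
    unfolding pm_inner_def by (rule sum.cong) (simp_all add: entry_prod)
  also have "\<dots> = real (card ({..<n} - D)) - real (card D)"
    using D_sub by (simp add: sum.If_cases Int_absorb1 Diff_eq)
  also have "card ({..<n} - D) = n - card D"
    using D_sub by (simp add: card_Diff_subset finite_subset)
  finally show ?thesis
    using dist_eq card_mono[OF _ D_sub] by (simp add: of_nat_diff)
qed

lemma pm_inner_self: "c \<in> pm_words n \<Longrightarrow> pm_inner n c c = real n"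
  using pm_inner_hamming_dist[of c n c] by (simp add: hamming_dist_def)

lemma sum_pm_inner_eq_sum_squares:
  "(\<Sum>c\<in>R. \<Sum>d\<in>R. pm_inner n c d) = (\<Sum>j<n. (\<Sum>c\<in>R. real_of_int (c ! j))\<^sup>2)"
proof -
  have "(\<Sum>c\<in>R. \<Sum>d\<in>R. pm_inner n c d)
      = (\<Sum>c\<in>R. \<Sum>j<n. \<Sum>d\<in>R. real_of_int (c ! j) * real_of_int (d ! j))"
    unfolding pm_inner_def by (intro sum.cong refl sum.swap)
  also have "\<dots> = (\<Sum>j<n. \<Sum>c\<in>R. \<Sum>d\<in>R. real_of_int (c ! j) * real_of_int (d ! j))"
    by (rule sum.swap)
  finally show ?thesis
    unfolding power2_eq_square sum_product .
qed

lemma sum_pm_inner_upper_bound: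
  assumes "finite R" "R \<subseteq> pm_words n"
    and far: "\<And>c d. c \<in> R \<Longrightarrow> d \<in> R \<Longrightarrow> c \<noteq> d \<Longrightarrow> (1/2 - \<epsilon>) * real n \<le> real (hamming_dist c d)"
  shows "(\<Sum>c\<in>R. \<Sum>d\<in>R. pm_inner n c d)
           \<le> real (card R) * (real n + (real (card R) - 1) * (2 * \<epsilon> * real n))"
proof -
  have row_bound: "(\<Sum>d\<in>R. pm_inner n c d) \<le> real n + (real (card R) - 1) * (2 * \<epsilon> * real n)"
    if c: "c \<in> R" for c
  proof -
    have "(\<Sum>d\<in>R. pm_inner n c d) = pm_inner n c c + (\<Sum>d\<in>R - {c}. pm_inner n c d)"
      using assms(1) c by (simp add: sum.remove)
    also have "pm_inner n c c = real n"
      using c assms(2) by (auto intro: pm_inner_self)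
    also have "(\<Sum>d\<in>R - {c}. pm_inner n c d) \<le> (\<Sum>d\<in>R - {c}. 2 * \<epsilon> * real n)"
    proof (rule sum_mono)
      fix d assume d: "d \<in> R - {c}"
      then have "(1/2 - \<epsilon>) * real n \<le> real (hamming_dist c d)"
        using far[of c d] c by auto
      moreover have "pm_inner n c d = real n - 2 * real (hamming_dist c d)"
        using c d assms(2) by (auto intro: pm_inner_hamming_dist)
      ultimately show "pm_inner n c d \<le> 2 * \<epsilon> * real n"
        by (simp add: algebra_simps)
    qed
    also have "\<dots> = (real (card R) - 1) * (2 * \<epsilon> * real n)"
    proof -
      have "card R \<ge> 1" using assms(1) c by (metis Suc_leI card_gt_0_iff empty_iff One_nat_def)
      then show ?thesis using assms(1) c by (simp add: of_nat_diff)
    qed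
    finally show ?thesis by simp
  qed
  have "(\<Sum>c\<in>R. \<Sum>d\<in>R. pm_inner n c d)
          \<le> (\<Sum>c\<in>R. real n + (real (card R) - 1) * (2 * \<epsilon> * real n))"
    by (rule sum_mono) (rule row_bound)
  then show ?thesis by simp
qed

lemma sum_squares_lower_bound:
  assumes "L \<subseteq> {..<n}" "\<forall>j\<in>L. a j \<in> {-1, 1}"
    and agree: "\<And>c j. c \<in> R \<Longrightarrow> j \<in> L \<Longrightarrow> c ! j = a j"
  shows "real (card L) * (real (card R))\<^sup>2 \<le> (\<Sum>j<n. (\<Sum>c\<in>R. real_of_int (c ! j))\<^sup>2)"
proof -
  have "(\<Sum>c\<in>R. real_of_int (c ! j))\<^sup>2 = (real (card R))\<^sup>2" if "j \<in> L" for j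
  proof -
    have "(real_of_int (a j))\<^sup>2 = 1" using that assms(2) by auto
    then show ?thesis using that by (simp add: agree power_mult_distrib)
  qed
  then have "real (card L) * (real (card R))\<^sup>2 = (\<Sum>j\<in>L. (\<Sum>c\<in>R. real_of_int (c ! j))\<^sup>2)"
    by simp
  also have "\<dots> \<le> (\<Sum>j<n. (\<Sum>c\<in>R. real_of_int (c ! j))\<^sup>2)"
    using assms(1) by (intro sum_mono2) auto
  finally show ?thesis .
qed

lemma count_bound_from_quadratic:
  fixes l m n \<epsilon> :: real
  assumes quadratic: "l * m\<^sup>2 \<le> m * (n + (m - 1) * (2 * \<epsilon> * n))"
    and "0 \<le> m" "0 < n" "l \<le> n" "l / n > 2 * \<epsilon>"
  shows "m \<le> (1 - 2 * \<epsilon>) / (l / n - 2 * \<epsilon>)"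
proof (cases "m = 0")
  case True
  have "l / n \<le> 1" using assms(3,4) by simp
  with True assms(5) show ?thesis by simp
next
  case False
  with assms(2) have "l * m \<le> n + (m - 1) * (2 * \<epsilon> * n)"
    using quadratic by (simp add: power2_eq_square mult.assoc)
  then have "m * (l / n - 2 * \<epsilon>) \<le> 1 - 2 * \<epsilon>"
    using \<open>0 < n\<close> by (simp add: field_simps)
  with assms(5) show ?thesis by (simp add: le_divide_eq)
qed

theorem lemma4:
  fixes n :: nat and \<epsilon> :: real and C :: "int list set" and L :: "nat set" and a :: "nat \<Rightarrow> int"
  assumes "linear_code n C"
    and "eps_balanced n \<epsilon> C"
    and "L \<subseteq> {0..<n}"
    and "card L > 0"
    and "\<forall>j\<in>L. a j \<in> {-1, 1}"
    and "real (card L) / real n > 2 * \<epsilon>"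
  shows "real (card (restricted_code C L a))
           \<le> (1 - 2 * \<epsilon>) / (real (card L) / real n - 2 * \<epsilon>)"
proof -
  define R where "R = restricted_code C L a"
  have "R \<subseteq> C" unfolding R_def restricted_code_def by auto
  with assms(1) have R_words: "R \<subseteq> pm_words n" unfolding linear_code_def by auto
  then have "finite R" using finite_pm_words finite_subset by blast
  have "card L \<le> n" using card_mono[OF _ assms(3)] by simp
  with assms(4) have "0 < n" by simp
  have "real (card L) * (real (card R))\<^sup>2 \<le> (\<Sum>j<n. (\<Sum>c\<in>R. real_of_int (c ! j))\<^sup>2)"
    using assms(3,5) by (intro sum_squares_lower_bound) (auto simp: R_def restricted_code_def)
  also have "\<dots> = (\<Sum>c\<in>R. \<Sum>d\<in>R. pm_inner n c d)"
    by (rule sum_pm_inner_eq_sum_squares[symmetric])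
  also have "\<dots> \<le> real (card R) * (real n + (real (card R) - 1) * (2 * \<epsilon> * real n))"
    using \<open>finite R\<close> R_words assms(2) \<open>R \<subseteq> C\<close>
    by (intro sum_pm_inner_upper_bound) (auto simp: eps_balanced_def)
  finally have "real (card L) * (real (card R))\<^sup>2
                  \<le> real (card R) * (real n + (real (card R) - 1) * (2 * \<epsilon> * real n))" .
  then show ?thesis
    unfolding R_def[symmetric]
    using count_bound_from_quadratic \<open>0 < n\<close> \<open>card L \<le> n\<close> assms(6) by simp
qed

end
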